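(* Let $n$ be odd with $n\mid(q+1)$, let $m$ be a positive even integer, $b$ a positive integer with $\gcd(b,n)=1$, and $\delta$ an even integer with $2\le\delta\le\frac{n-m+1}{2}$. Put $$A=\{\alpha^{0}\}\cup\{\alpha^{\pm\frac{n+2j-1}{2}b}: j=1,\dots,\tfrac{m}{2}\},\qquad B=\{\alpha^{jb}:-\tfrac{\delta-2}{2}\le j\le\tfrac{\delta-2}{2}\},$$ and let $d_A^{\perp}$ be the minimum distance of the dual of the cyclic code of length $n$ over $\mathbb{F}_{q^2}$ with complete defining set $A$. Then $C_{AB}$ is a cyclic $(d_A^{\perp}-\delta+1,\delta)$-LRC over $\mathbb{F}_q$ with dimension $n-m-2\delta+3$. If moreover $\delta-2<n-m-d_A^{\perp}$, then $C_{AB}$ is optimal and has minimum distance $m+\delta-1$.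
   Context: Let $q$ be a prime power and $n\mid(q+1)$, so the set $R_n$ of all $n$-th roots of unity lies in $\mathbb{F}_{q^2}$; let $\alpha\in\mathbb{F}_{q^2}$ be a primitive $n$-th root of unity. For $A,B\subseteq R_n$, $AB=\{\beta\gamma:\beta\in A,\gamma\in B\}$. For $Z\subseteq R_n$, the cyclic code of length $n$ over $\mathbb{F}_{q^2}$ with complete defining set $Z$ is the ideal generated by $\prod_{\beta\in Z}(x-\beta)$ in $\mathbb{F}_{q^2}[x]/(x^n-1)$; if $\{j:\alpha^j\in Z\}$ is closed under $j\mapsto-j\bmod n$ (a union of $q$-cyclotomic cosets), $C_Z$ denotes the cyclic code of length $n$ over $\mathbb{F}_q$ generated by this polynomial, which lies in $\mathbb{F}_q[x]$. Locality: for a linear code $C\subseteq\mathbb{F}_q^n$ and integers $r\ge1$, $\delta\ge2$, the $i$-th coordinate has $(r,\delta)$-locality if there is $S_i\subseteq\{1,\dots,n\}$ with $i\in S_i$, $|S_i|\le r+\delta-1$ such that the punctured code $C|_{S_i}$ has minimum distance at least $\delta$; $C$ is an $(r,\delta)$-LRC if every coordinate has $(r,\delta)$-locality. An $[n,k,d]$ $(r,\delta)$-LRC is optimal if $d=n-k-(\lceil k/r\rceil-1)(\delta-1)+1$ (always an upper bound on $d$). *)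

theory Defs
  imports "HOL-Computational_Algebra.Computational_Algebra"
begin

text \<open>Vectors of length n over a field are represented by polynomials of degree < n
  (coordinate i = coefficient of x^i, i = 0..n-1).\<close>

definition prime_power :: "nat \<Rightarrow> bool" where
  "prime_power q \<longleftrightarrow> (\<exists>p k. prime p \<and> k > 0 \<and> q = p ^ k)"

definition subfield_q :: "nat \<Rightarrow> 'a::field set" where
  "subfield_q q = {x. x ^ q = x}"

definition primitive_root_unity :: "nat \<Rightarrow> 'a::field \<Rightarrow> bool" where
  "primitive_root_unity n a \<longleftrightarrow> n > 0 \<and> a ^ n = 1 \<and> (\<forall>k. 0 < k \<and> k < n \<longrightarrow> a ^ k \<noteq> 1)"

text \<open>alpha to an integer exponent, for alpha an n-th root of unity\<close>
definition ipow :: "nat \<Rightarrow> 'a::field \<Rightarrow> int \<Rightarrow> 'a" where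
  "ipow n a e = a ^ nat (e mod int n)"

definition set_mult :: "'a::field set \<Rightarrow> 'a set \<Rightarrow> 'a set" where
  "set_mult A B = {x * y | x y. x \<in> A \<and> y \<in> B}"

definition gen_poly :: "'a::field set \<Rightarrow> 'a poly" where
  "gen_poly Z = (\<Prod>\<beta>\<in>Z. [:- \<beta>, 1:])"

definition xn_minus_1 :: "nat \<Rightarrow> 'a::field poly" where
  "xn_minus_1 n = monom 1 n - 1"

text \<open>Cyclic code of length n over the whole field with complete defining set Z:
  the ideal generated by gen_poly Z in F[x]/(x^n-1), elements as reduced representatives.\<close>
definition cyclic_code :: "nat \<Rightarrow> 'a::field set \<Rightarrow> 'a poly set" where
  "cyclic_code n Z = {(f * gen_poly Z) mod xn_minus_1 n | f. True}"

definition cyclic_code_q :: "nat \<Rightarrow> nat \<Rightarrow> 'a::field set \<Rightarrow> 'a poly set" where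
  "cyclic_code_q q n Z = {(f * gen_poly Z) mod xn_minus_1 n | f.
       \<forall>i. coeff f i \<in> subfield_q q}"

definition dual_code :: "nat \<Rightarrow> 'a::field poly set \<Rightarrow> 'a poly set" where
  "dual_code n C = {v. degree v < n \<and> (\<forall>c\<in>C. (\<Sum>i<n. coeff v i * coeff c i) = 0)}"

definition weight :: "nat \<Rightarrow> 'a::zero poly \<Rightarrow> nat" where
  "weight n c = card {i. i < n \<and> coeff c i \<noteq> 0}"

definition min_dist :: "nat \<Rightarrow> 'a::zero poly set \<Rightarrow> nat" where
  "min_dist n C = Min {weight n c | c. c \<in> C \<and> c \<noteq> 0}"

definition code_dim :: "nat \<Rightarrow> 'a poly set \<Rightarrow> nat" where
  "code_dim q C = (THE k. card C = q ^ k)"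

definition has_locality :: "nat \<Rightarrow> 'a::zero poly set \<Rightarrow> int \<Rightarrow> int \<Rightarrow> nat \<Rightarrow> bool" where
  "has_locality n C r \<delta> i \<longleftrightarrow>
     (\<exists>S. S \<subseteq> {..<n} \<and> i \<in> S \<and> int (card S) \<le> r + \<delta> - 1 \<and>
        (\<forall>c\<in>C. (\<exists>j\<in>S. coeff c j \<noteq> 0) \<longrightarrow> int (card {j\<in>S. coeff c j \<noteq> 0}) \<ge> \<delta>))"

definition is_LRC :: "nat \<Rightarrow> 'a::zero poly set \<Rightarrow> int \<Rightarrow> int \<Rightarrow> bool" where
  "is_LRC n C r \<delta> \<longleftrightarrow> r \<ge> 1 \<and> \<delta> \<ge> 2 \<and> (\<forall>i<n. has_locality n C r \<delta> i)"

definition optimal_LRC :: "nat \<Rightarrow> nat \<Rightarrow> 'a::zero poly set \<Rightarrow> int \<Rightarrow> int \<Rightarrow> bool" where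
  "optimal_LRC q n C r \<delta> \<longleftrightarrow> is_LRC n C r \<delta> \<and>
     (let k = int (code_dim q C) in
      int (min_dist n C) = int n - k - (\<lceil>real_of_int k / real_of_int r\<rceil> - 1) * (\<delta> - 1) + 1)"

end

(*
  Write n = 2t + 1, m = 2u, \<delta> = 2h + 2 and \<omega> = \<alpha>^b, again a primitive n-th root of unity.
  Then AB = {\<omega>^e : e \<in> [-h, h] \<union> [t+1-u-h, t+u+h]} has m + 2\<delta> - 3 elements and is closed
  under inversion. As n divides q + 1, every n-th root of unity satisfies \<beta>^q = \<beta>\<inverse>, so the
  generator polynomial of AB is fixed by the Frobenius map, its coefficients lie in F_q, and
  C_AB has dimension n - |AB|.

  Locality: for \<gamma> \<in> B, rotating a codeword c and twisting it by the powers of \<gamma> gives a word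
  vanishing on A (because A\<gamma> \<subseteq> AB), hence orthogonal to every dual codeword v of the code
  with defining set A. So the coordinatewise product of v and a rotation of c vanishes at the
  \<delta> - 1 consecutive powers \<omega>^-h, ..., \<omega>^h, and by the BCH bound it is zero or has weight at
  least \<delta>. The support of a dual codeword of minimum weight d_A, rotated onto any coordinate,
  is therefore a repair group of size d_A = r + \<delta> - 1.

  Distance: AB contains m + \<delta> - 2 consecutive powers of \<omega>, so d \<ge> m + \<delta> - 1 by the BCH
  bound. If d_A \<le> k + \<delta> - 2, a codeword vanishing on k - 1 suitable coordinates must vanish on
  the support of a minimal dual codeword as well, which leaves weight at most m + \<delta> - 1.
  Since r < k \<le> 2r this equals the bound n - k - (\<lceil>k/r\<rceil> - 1)(\<delta> - 1) + 1.
*)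

theory Submission
  imports Defs "HOL-Algebra.FiniteProduct" "HOL-Number_Theory.Cong"
begin

lemma finite_field_power_card:
  fixes x :: "'a::{field,finite}"
  shows "x ^ card (UNIV :: 'a set) = x"
proof (cases "x = 0")
  case False
  define G :: "'a monoid" where "G = \<lparr>carrier = UNIV - {0}, mult = (*), one = 1\<rparr>"
  interpret G: comm_group G
  proof (rule comm_groupI)
    fix y assume "y \<in> carrier G"
    then show "\<exists>z\<in>carrier G. z \<otimes>\<^bsub>G\<^esub> y = \<one>\<^bsub>G\<^esub>"
      by (intro bexI[of _ "inverse y"]) (auto simp: G_def)
  qed (auto simp: G_def mult.assoc mult.commute)
  have pow: "y [^]\<^bsub>G\<^esub> k = y ^ k" for y and k :: nat
    by (induction k) (simp_all add: G_def)
  have "x ^ (card (UNIV :: 'a set) - 1) = 1"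
    using G.power_order_eq_one[of x] False unfolding pow by (simp add: G_def)
  moreover have "card (UNIV :: 'a set) = Suc (card (UNIV :: 'a set) - 1)"
    using finite_UNIV_card_ge_0[where 'a='a] by simp
  ultimately show ?thesis
    by (metis power_Suc2 mult_1_left)
qed (use finite_UNIV_card_ge_0[where 'a='a] in auto)

lemma CHAR_dvd_card: "CHAR('a::{ring_1,finite}) dvd card (UNIV :: 'a set)"
proof -
  define G :: "'a monoid" where "G = \<lparr>carrier = UNIV, mult = (+), one = 0\<rparr>"
  interpret G: comm_group G
  proof (rule comm_groupI)
    fix y assume "y \<in> carrier G"
    then show "\<exists>z\<in>carrier G. z \<otimes>\<^bsub>G\<^esub> y = \<one>\<^bsub>G\<^esub>"
      by (intro bexI[of _ "- y"]) (auto simp: G_def)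
  qed (auto simp: G_def add.assoc add.commute)
  have pow: "1 [^]\<^bsub>G\<^esub> k = (of_nat k :: 'a)" for k :: nat
    by (induction k) (simp_all add: G_def)
  have "(of_nat (card (UNIV :: 'a set)) :: 'a) = 0"
    using G.power_order_eq_one[of 1] unfolding pow by (simp add: G_def)
  then show ?thesis
    by (simp add: of_nat_eq_0_iff_char_dvd)
qed

lemma CHAR_eq_prime_of_card:
  assumes "prime p" "card (UNIV :: 'a::{field,finite} set) = p ^ e"
  shows "CHAR('a) = p"
proof -
  have "prime CHAR('a)"
    by (intro prime_CHAR_semidom finite_imp_CHAR_pos) simp
  moreover from CHAR_dvd_card[where 'a='a] assms(2) have "CHAR('a) dvd p ^ e"
    by simp
  ultimately show ?thesis
    using assms(1) prime_dvd_power primes_dvd_imp_eq by blast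
qed

definition poly_of_fun :: "nat \<Rightarrow> (nat \<Rightarrow> 'a::comm_monoid_add) \<Rightarrow> 'a poly" where
  "poly_of_fun n a = (\<Sum>i<n. monom (a i) i)"

lemma coeff_poly_of_fun: "coeff (poly_of_fun n a) i = (if i < n then a i else 0)"
  by (simp add: poly_of_fun_def coeff_sum coeff_monom)

lemma poly_poly_of_fun:
  fixes a :: "nat \<Rightarrow> 'a::comm_semiring_1"
  shows "poly (poly_of_fun n a) x = (\<Sum>i<n. a i * x ^ i)"
  by (simp add: poly_of_fun_def poly_sum poly_monom)

lemma coeffs_above_zero_iff: "(\<forall>i\<ge>k. coeff r i = 0) \<longleftrightarrow> r = 0 \<or> degree r < k"
proof
  show "(\<forall>i\<ge>k. coeff r i = 0) \<Longrightarrow> r = 0 \<or> degree r < k"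
    by (meson leading_coeff_neq_0 not_le)
  show "r = 0 \<or> degree r < k \<Longrightarrow> \<forall>i\<ge>k. coeff r i = 0"
    by (auto intro: coeff_eq_0)
qed

lemma poly_eq_sum_below:
  fixes c :: "'a::comm_semiring_1 poly"
  assumes "\<forall>i\<ge>n. coeff c i = 0"
  shows "poly c x = (\<Sum>i<n. coeff c i * x ^ i)"
proof (cases "c = 0")
  case False
  with assms have "degree c < n"
    by (simp add: coeffs_above_zero_iff)
  then show ?thesis
    unfolding poly_altdef by (intro sum.mono_neutral_left) (auto simp: coeff_eq_0)
qed simp

lemma exists_coeff_below_nonzero:
  assumes "\<forall>i\<ge>n. coeff c i = 0" "c \<noteq> 0"
  shows "\<exists>i<n. coeff c i \<noteq> 0"
  using assms by (metis leading_coeff_neq_0 not_le)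

lemma weight_le: "weight n c \<le> n"
proof -
  have "card {i. i < n \<and> coeff c i \<noteq> 0} \<le> card {..<n}"
    by (intro card_mono) auto
  then show ?thesis
    by (simp add: weight_def)
qed

lemma finite_weights: "finite {weight n c | c. c \<in> C \<and> c \<noteq> 0}"
  by (rule finite_subset[of _ "{..n}"]) (auto simp: weight_le)

lemma min_dist_attained:
  assumes "c \<in> C" "c \<noteq> 0"
  shows "\<exists>c'\<in>C. c' \<noteq> 0 \<and> weight n c' = min_dist n C"
proof -
  have "min_dist n C \<in> {weight n c | c. c \<in> C \<and> c \<noteq> 0}"
    unfolding min_dist_def using assms finite_weights by (intro Min_in) auto
  then show ?thesis
    by auto
qed

lemma min_dist_le_weight:
  assumes "c \<in> C" "c \<noteq> 0"
  shows "min_dist n C \<le> weight n c"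
  unfolding min_dist_def using assms finite_weights by (intro Min_le) auto

lemma card_polys_coeffs_in_below:
  fixes K :: "'a::comm_monoid_add set"
  assumes "finite K" "0 \<in> K"
  shows "card {r. (\<forall>i. coeff r i \<in> K) \<and> (\<forall>i\<ge>k. coeff r i = 0)} = card K ^ k"
proof -
  let ?P = "{r. (\<forall>i. coeff r i \<in> K) \<and> (\<forall>i\<ge>k. coeff r i = 0)}"
  have "bij_betw (\<lambda>r. restrict (coeff r) {..<k}) ?P (PiE {..<k} (\<lambda>_. K))"
  proof (rule bij_betw_byWitness[where f' = "poly_of_fun k"])
    show "\<forall>r\<in>?P. poly_of_fun k (restrict (coeff r) {..<k}) = r"
      by (auto simp: poly_eq_iff coeff_poly_of_fun)
    show "\<forall>G\<in>PiE {..<k} (\<lambda>_. K). restrict (coeff (poly_of_fun k G)) {..<k} = G"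
      by (auto simp: coeff_poly_of_fun PiE_def extensional_def)
    show "(\<lambda>r. restrict (coeff r) {..<k}) ` ?P \<subseteq> PiE {..<k} (\<lambda>_. K)"
      by (auto intro!: PiE_I split: if_splits)
    show "poly_of_fun k ` PiE {..<k} (\<lambda>_. K) \<subseteq> ?P"
    proof (rule image_subsetI)
      fix G assume "G \<in> PiE {..<k} (\<lambda>_. K)"
      then show "poly_of_fun k G \<in> ?P"
        using assms(2) by (simp add: coeff_poly_of_fun PiE_iff)
    qed
  qed
  then show ?thesis
    using assms(1) by (simp add: bij_betw_same_card card_PiE)
qed

lemma prod_linear_factors_dvd:
  fixes p :: "'a::field poly"
  assumes "finite Z" "\<forall>z\<in>Z. poly p z = 0"
  shows "(\<Prod>z\<in>Z. [:-z, 1:]) dvd p"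
  using assms
proof (induction Z arbitrary: p rule: finite_induct)
  case (insert a Z)
  then obtain p' where p': "p = [:-a, 1:] * p'"
    by (meson dvdE insertI1 poly_eq_0_iff_dvd)
  have "\<forall>z\<in>Z. poly p' z = 0"
    using insert p' by auto
  then have "(\<Prod>z\<in>Z. [:-z, 1:]) dvd p'"
    by (rule insert.IH)
  then have "[:-a, 1:] * (\<Prod>z\<in>Z. [:-z, 1:]) dvd p"
    unfolding p' by (rule mult_dvd_mono[OF dvd_refl])
  then show ?case
    by (simp only: prod.insert[OF insert.hyps])
qed simp

lemma degree_xn_minus_1 [simp]: "degree (xn_minus_1 n :: 'a::field poly) = n"
proof (cases "n = 0")
  case False
  then have "degree (monom 1 n - 1 :: 'a poly) = degree (monom 1 n :: 'a poly)"
    using degree_add_eq_left[of "- 1" "monom 1 n :: 'a poly"] by (simp add: degree_monom_eq)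
  then show ?thesis
    by (simp add: xn_minus_1_def degree_monom_eq)
qed (simp add: xn_minus_1_def)

lemma poly_xn_minus_1 [simp]: "poly (xn_minus_1 n) x = x ^ n - 1"
  by (simp add: xn_minus_1_def poly_monom)

lemma power_mod_exponent:
  fixes x :: "'a::monoid_mult"
  assumes "x ^ n = 1"
  shows "x ^ k = x ^ (k mod n)"
proof -
  have "x ^ k = x ^ (n * (k div n) + k mod n)"
    by simp
  also have "\<dots> = (x ^ n) ^ (k div n) * x ^ (k mod n)"
    by (simp only: power_add power_mult)
  finally show ?thesis
    using assms by simp
qed

lemma ipow_cong: "a mod int n = c mod int n \<Longrightarrow> ipow n x a = ipow n x c"
  by (simp add: ipow_def)

lemma ipow_add_multiple: "ipow n x (a + int n * k) = ipow n x a"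
  by (rule ipow_cong) simp

lemma ipow_of_nat: "x ^ n = 1 \<Longrightarrow> ipow n x (int k) = x ^ k"
  by (simp add: ipow_def power_mod_exponent[of x n k] flip: of_nat_mod)

lemma ipow_add:
  assumes "n > 0" "x ^ n = 1"
  shows "ipow n x (a + c) = ipow n x a * ipow n x c"
proof -
  have "ipow n x a * ipow n x c = x ^ (nat (a mod int n) + nat (c mod int n))"
    by (simp add: ipow_def power_add)
  also have "\<dots> = ipow n x (int (nat (a mod int n) + nat (c mod int n)))"
    by (rule ipow_of_nat[symmetric, OF assms(2)])
  also have "\<dots> = ipow n x (a + c)"
    using assms(1) by (intro ipow_cong) (simp add: mod_add_eq)
  finally show ?thesis ..
qed

lemma ipow_0: "x ^ n = 1 \<Longrightarrow> ipow n x 0 = 1"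
  using ipow_of_nat[of x n 0] by simp

lemma ipow_power:
  assumes "n > 0" "x ^ n = 1"
  shows "ipow n x a ^ k = ipow n x (a * int k)"
proof (induction k)
  case (Suc k)
  have "ipow n x a ^ Suc k = ipow n x a * ipow n x (a * int k)"
    by (simp add: Suc.IH)
  also have "\<dots> = ipow n x (a * int (Suc k))"
    by (simp add: ipow_add[OF assms] distrib_left)
  finally show ?case .
qed (simp add: ipow_0 assms)

lemma ipow_root:
  assumes "n > 0" "x ^ n = 1"
  shows "ipow n x a ^ n = 1"
proof -
  have "ipow n x a ^ n = ipow n x (a * int n)"
    by (rule ipow_power[OF assms])
  also have "\<dots> = ipow n x 0"
    by (rule ipow_cong) simp
  finally show ?thesis
    using ipow_0[OF assms(2)] by simp
qed

lemma ipow_nonzero: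
  assumes "n > 0" "x ^ n = 1"
  shows "ipow n x a \<noteq> 0"
proof
  assume "ipow n x a = 0"
  then have "(0::'a) ^ n = 1"
    using ipow_root[OF assms, of a] by simp
  with assms(1) show False
    by (simp add: power_0_left)
qed

lemma ipow_power_base:
  assumes "n > 0" "x ^ n = 1"
  shows "ipow n (x ^ b) a = ipow n x (a * int b)"
proof -
  have "ipow n (x ^ b) a = x ^ (b * nat (a mod int n))"
    by (simp add: ipow_def power_mult)
  also have "\<dots> = ipow n x (int (b * nat (a mod int n)))"
    by (rule ipow_of_nat[symmetric, OF assms(2)])
  also have "\<dots> = ipow n x (a * int b)"
  proof (rule ipow_cong)
    have "0 \<le> a mod int n"
      using assms(1) by simp
    then have eq: "int (b * nat (a mod int n)) = int b * (a mod int n)"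
      by simp
    show "int (b * nat (a mod int n)) mod int n = a * int b mod int n"
      unfolding eq by (simp add: mod_mult_right_eq mult.commute)
  qed
  finally show ?thesis .
qed

lemma primitive_root_unity_power_eq_1_iff:
  assumes "primitive_root_unity n x"
  shows "x ^ k = 1 \<longleftrightarrow> n dvd k"
proof -
  have n: "n > 0" "x ^ n = 1"
    using assms by (simp_all add: primitive_root_unity_def)
  have "x ^ k = x ^ (k mod n)"
    by (rule power_mod_exponent[OF n(2)])
  moreover have "x ^ (k mod n) \<noteq> 1" if "k mod n \<noteq> 0"
    using assms that n(1) by (simp add: primitive_root_unity_def)
  ultimately show ?thesis
    by (auto simp: dvd_eq_mod_eq_0)
qed

lemma primitive_root_unity_power_inj:
  assumes "primitive_root_unity n x" "i < n" "j < n" "x ^ i = x ^ j"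
  shows "i = j"
proof -
  have "x \<noteq> 0"
    using assms(1) by (auto simp: primitive_root_unity_def power_0_left)
  have *: "i = j" if "i \<le> j" "j < n" "x ^ i = x ^ j" for i j
  proof -
    have "x ^ i * x ^ (j - i) = x ^ j"
      using that(1) by (simp flip: power_add)
    then have "x ^ i * x ^ (j - i) = x ^ i * 1"
      using that(3) by simp
    then have "x ^ (j - i) = 1"
      using \<open>x \<noteq> 0\<close> by simp
    then have "n dvd j - i"
      using primitive_root_unity_power_eq_1_iff[OF assms(1)] by simp
    moreover have "j - i < n"
      using that by linarith
    ultimately have "\<not> 0 < j - i"
      using dvd_imp_le by fastforce
    with that(1) show "i = j"
      by simp
  qed
  show ?thesis
    using *[of i j] *[of j i] assms(2-4) by (cases "i \<le> j") auto
qed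

lemma ipow_eq_iff:
  assumes "primitive_root_unity n x"
  shows "ipow n x a = ipow n x c \<longleftrightarrow> a mod int n = c mod int n"
proof
  have n: "n > 0"
    using assms by (simp add: primitive_root_unity_def)
  then have "nat (a mod int n) < n" "nat (c mod int n) < n"
    by (simp_all add: nat_less_iff)
  moreover assume "ipow n x a = ipow n x c"
  ultimately have "nat (a mod int n) = nat (c mod int n)"
    using primitive_root_unity_power_inj[OF assms] by (simp add: ipow_def)
  then show "a mod int n = c mod int n"
    using n by (subst (asm) eq_nat_nat_iff) auto
qed (rule ipow_cong)

lemma primitive_root_unity_power:
  assumes "primitive_root_unity n x" "coprime b n"
  shows "primitive_root_unity n (x ^ b)"
  unfolding primitive_root_unity_def
proof (intro conjI allI impI)
  have "(x ^ b) ^ n = (x ^ n) ^ b"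
    by (simp only: mult.commute flip: power_mult)
  then show "n > 0" "(x ^ b) ^ n = 1"
    using assms(1) by (simp_all add: primitive_root_unity_def)
  fix k assume "0 < k \<and> k < n"
  then have "\<not> n dvd b * k"
    using assms(2) by (simp add: coprime_dvd_mult_right_iff coprime_commute nat_dvd_not_less)
  then show "(x ^ b) ^ k \<noteq> 1"
    using primitive_root_unity_power_eq_1_iff[OF assms(1)] by (simp flip: power_mult)
qed

lemma int_mod_nonzero:
  fixes e :: int
  assumes "\<bar>e\<bar> < n" "e \<noteq> 0"
  shows "e mod n \<noteq> 0"
proof
  assume "e mod n = 0"
  then have "\<bar>n\<bar> \<le> \<bar>e\<bar>"
    using dvd_imp_le_int[OF assms(2)] by auto
  with assms(1) show False
    by simp
qed

section \<open>The BCH bound\<close>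

lemma vandermonde_sum_eq_0:
  fixes y z :: "nat \<Rightarrow> 'a::field"
  assumes T: "finite T" and inj: "inj_on z T"
    and zero: "\<And>l. l < card T \<Longrightarrow> (\<Sum>j\<in>T. y j * z j ^ l) = 0"
    and j0: "j0 \<in> T"
  shows "y j0 = 0"
proof -
  define L where "L = (\<Prod>j\<in>T - {j0}. [:- z j, 1:])"
  have "degree L \<le> card (T - {j0})"
    unfolding L_def using degree_prod_sum_le[of "T - {j0}" "\<lambda>j. [:- z j, 1:]"] T by (simp add: o_def)
  moreover have "card T > 0"
    using j0 T card_gt_0_iff by blast
  ultimately have "degree L < card T"
    using j0 T by (simp add: card_Diff_singleton)
  then have "\<forall>i\<ge>card T. coeff L i = 0"
    by (simp add: coeff_eq_0)
  then have "(\<Sum>j\<in>T. y j * poly L (z j)) = (\<Sum>l<card T. coeff L l * (\<Sum>j\<in>T. y j * z j ^ l))"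
    by (simp add: poly_eq_sum_below sum_distrib_left sum_distrib_right mult_ac sum.swap[of _ T])
  also have "\<dots> = 0"
    using zero by simp
  finally have "(\<Sum>j\<in>T. y j * poly L (z j)) = 0" .
  moreover have "poly L (z j) = 0" if "j \<in> T - {j0}" for j
    unfolding L_def using T that by (auto simp: poly_prod prod_zero_iff)
  ultimately have "y j0 * poly L (z j0) = 0"
    by (simp add: sum.remove[OF T j0])
  moreover have "poly L (z j0) \<noteq> 0"
    unfolding L_def using T inj j0 by (auto simp: poly_prod prod_zero_iff inj_on_def)
  ultimately show ?thesis
    by simp
qed

lemma bch_bound:
  fixes x :: "nat \<Rightarrow> 'a::field"
  assumes \<omega>: "primitive_root_unity n \<omega>"
    and zero: "\<And>l. l < K \<Longrightarrow> (\<Sum>i<n. x i * ipow n \<omega> (s + int l) ^ i) = 0"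
    and nonzero: "\<exists>i<n. x i \<noteq> 0"
  shows "K + 1 \<le> card {i. i < n \<and> x i \<noteq> 0}"
proof (rule ccontr)
  define T where "T = {i. i < n \<and> x i \<noteq> 0}"
  have n: "n > 0" "\<omega> ^ n = 1"
    using \<omega> by (simp_all add: primitive_root_unity_def)
  assume "\<not> K + 1 \<le> card {i. i < n \<and> x i \<noteq> 0}"
  then have card_T: "card T \<le> K"
    unfolding T_def by simp
  have "x j * ipow n \<omega> s ^ j = 0" if "j \<in> T" for j
  proof (rule vandermonde_sum_eq_0[where z = "\<lambda>j. \<omega> ^ j"])
    show "finite T" "j \<in> T"
      using that by (simp_all add: T_def)
    show "inj_on (\<lambda>j. \<omega> ^ j) T"
      using primitive_root_unity_power_inj[OF \<omega>] by (auto simp: T_def inj_on_def)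
    fix l assume "l < card T"
    have "ipow n \<omega> (s + int l) ^ i = ipow n \<omega> s ^ i * (\<omega> ^ i) ^ l" for i
    proof -
      have "(\<omega> ^ l) ^ i = (\<omega> ^ i) ^ l"
        by (simp only: mult.commute flip: power_mult)
      then show ?thesis
        by (simp add: ipow_add[OF n] ipow_of_nat[OF n(2)] power_mult_distrib)
    qed
    then have "(\<Sum>j\<in>T. x j * ipow n \<omega> s ^ j * (\<omega> ^ j) ^ l) = (\<Sum>i<n. x i * ipow n \<omega> (s + int l) ^ i)"
      by (intro sum.mono_neutral_cong_left) (auto simp: T_def mult.assoc)
    then show "(\<Sum>j\<in>T. x j * ipow n \<omega> s ^ j * (\<omega> ^ j) ^ l) = 0"
      using zero \<open>l < card T\<close> card_T by simp
  qed
  then have "T = {}"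
    using ipow_nonzero[OF n] unfolding T_def by auto
  with nonzero show False
    unfolding T_def by auto
qed

lemma xn_minus_1_nonzero: "n > 0 \<Longrightarrow> xn_minus_1 n \<noteq> (0 :: 'a::field poly)"
  using degree_xn_minus_1[of n, where 'a='a] by (auto simp del: degree_xn_minus_1)

lemma cyclic_code_memD:
  fixes Z :: "'a::field set"
  assumes "n > 0" "finite Z" "\<And>\<beta>. \<beta> \<in> Z \<Longrightarrow> \<beta> ^ n = 1" "c \<in> cyclic_code n Z"
  shows "\<forall>i\<ge>n. coeff c i = 0" "\<forall>\<beta>\<in>Z. poly c \<beta> = 0"
proof -
  obtain f where f: "c = (f * gen_poly Z) mod xn_minus_1 n"
    using assms(4) unfolding cyclic_code_def by blast
  then have "c = 0 \<or> degree c < n"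
    using degree_mod_less[OF xn_minus_1_nonzero[OF assms(1)], of "f * gen_poly Z"] by auto
  then show "\<forall>i\<ge>n. coeff c i = 0"
    by (simp add: coeffs_above_zero_iff)
  show "\<forall>\<beta>\<in>Z. poly c \<beta> = 0"
  proof
    fix \<beta> assume "\<beta> \<in> Z"
    then have "poly (gen_poly Z) \<beta> = 0"
      using assms(2) by (simp add: gen_poly_def poly_prod prod_zero_iff)
    moreover have "poly (f * gen_poly Z) \<beta> = poly ((f * gen_poly Z) div xn_minus_1 n * xn_minus_1 n + c) \<beta>"
      unfolding f by simp
    ultimately show "poly c \<beta> = 0"
      using assms(3)[OF \<open>\<beta> \<in> Z\<close>] by simp
  qed
qed

lemma cyclic_code_iff:
  fixes Z :: "'a::field set"
  assumes "n > 0" "finite Z" "\<And>\<beta>. \<beta> \<in> Z \<Longrightarrow> \<beta> ^ n = 1"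
  shows "c \<in> cyclic_code n Z \<longleftrightarrow> (\<forall>i\<ge>n. coeff c i = 0) \<and> (\<forall>\<beta>\<in>Z. poly c \<beta> = 0)"
proof
  assume c: "(\<forall>i\<ge>n. coeff c i = 0) \<and> (\<forall>\<beta>\<in>Z. poly c \<beta> = 0)"
  then have "gen_poly Z dvd c"
    using prod_linear_factors_dvd[OF assms(2)] unfolding gen_poly_def by blast
  then obtain f where f: "c = f * gen_poly Z"
    by (metis dvdE mult.commute)
  from c have "c mod xn_minus_1 n = c"
    by (auto simp: coeffs_above_zero_iff mod_poly_less)
  then show "c \<in> cyclic_code n Z"
    unfolding cyclic_code_def using f by (auto intro!: exI[of _ f])
qed (use cyclic_code_memD[OF assms] in blast)

lemma geometric_poly_in_cyclic_code:
  fixes Z :: "'a::field set"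
  assumes "n > 0" "finite Z" "\<And>\<beta>. \<beta> \<in> Z \<Longrightarrow> \<beta> ^ n = 1"
    and "\<gamma> ^ n = 1" "\<And>\<beta>. \<beta> \<in> Z \<Longrightarrow> \<gamma> * \<beta> \<noteq> 1"
  shows "poly_of_fun n (\<lambda>i. \<gamma> ^ i) \<in> cyclic_code n Z"
proof -
  have "poly (poly_of_fun n (\<lambda>i. \<gamma> ^ i)) \<beta> = 0" if "\<beta> \<in> Z" for \<beta>
  proof -
    have "(\<gamma> * \<beta>) ^ n = 1" "\<gamma> * \<beta> \<noteq> 1"
      using assms(3-5) that by (simp_all add: power_mult_distrib)
    then show ?thesis
      by (simp add: poly_poly_of_fun sum_gp_strict flip: power_mult_distrib)
  qed
  then show ?thesis
    using cyclic_code_iff[OF assms(1-3)] by (simp add: coeff_poly_of_fun)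
qed

lemma inj_on_add_mod: "inj_on (\<lambda>i. (i + \<tau>) mod n) {..<n :: nat}"
proof (rule inj_onI)
  fix i j assume "i \<in> {..<n}" "j \<in> {..<n}" "(i + \<tau>) mod n = (j + \<tau>) mod n"
  then show "i = j"
    using cong_add_rcancel_nat[of i \<tau> j n] by (simp add: cong_def)
qed

lemma sum_add_mod:
  fixes n :: nat
  assumes "n > 0"
  shows "(\<Sum>i<n. f ((i + \<tau>) mod n)) = (\<Sum>i<n. f i)"
proof -
  have "(\<lambda>i. (i + \<tau>) mod n) ` {..<n} = {..<n}"
    using assms by (intro endo_inj_surj inj_on_add_mod) auto
  then show ?thesis
    using sum.reindex[OF inj_on_add_mod, of f \<tau> n] by simp
qed

text \<open>Rotating a word by \<open>\<tau>\<close> positions and twisting it by the powers of \<open>\<gamma>\<close> moves its zeros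
  from \<open>\<beta>\<gamma>\<close> to \<open>\<beta>\<close>.\<close>

lemma poly_twisted_rotation:
  fixes c :: "'a::field poly"
  assumes "n > 0" "\<forall>i\<ge>n. coeff c i = 0" "\<beta> ^ n = 1" "\<gamma> ^ n = 1"
  shows "\<beta> ^ \<tau> * poly (poly_of_fun n (\<lambda>i. coeff c ((i + \<tau>) mod n) * \<gamma> ^ ((i + \<tau>) mod n))) \<beta>
           = poly c (\<beta> * \<gamma>)"
proof -
  have rotate: "\<beta> ^ i * \<beta> ^ \<tau> = \<beta> ^ ((i + \<tau>) mod n)" for i
    using power_mod_exponent[OF assms(3)] by (simp flip: power_add)
  have "\<beta> ^ \<tau> * poly (poly_of_fun n (\<lambda>i. coeff c ((i + \<tau>) mod n) * \<gamma> ^ ((i + \<tau>) mod n))) \<beta>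
      = (\<Sum>i<n. coeff c ((i + \<tau>) mod n) * \<gamma> ^ ((i + \<tau>) mod n) * (\<beta> ^ i * \<beta> ^ \<tau>))"
    by (simp add: poly_poly_of_fun sum_distrib_left mult_ac)
  also have "\<dots> = (\<Sum>i<n. (\<lambda>j. coeff c j * (\<beta> * \<gamma>) ^ j) ((i + \<tau>) mod n))"
    unfolding rotate by (simp add: power_mult_distrib mult_ac)
  also have "\<dots> = (\<Sum>j<n. coeff c j * (\<beta> * \<gamma>) ^ j)"
    by (rule sum_add_mod[OF assms(1)])
  also have "\<dots> = poly c (\<beta> * \<gamma>)"
    using assms(2) by (simp add: poly_eq_sum_below)
  finally show ?thesis .
qed

section \<open>The field with \<open>q\<^sup>2\<close> elements and its Frobenius map\<close>

locale field_of_square_order =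
  fixes q :: nat and field :: "'a::{field,finite} itself"
  assumes prime_power_q: "prime_power q" and card_field: "card (UNIV :: 'a set) = q ^ 2"
begin

lemma prime_CHAR: "prime CHAR('a)"
  by (intro prime_CHAR_semidom finite_imp_CHAR_pos) simp

lemma q_eq_CHAR_power: obtains e where "e > 0" "q = CHAR('a) ^ e"
proof -
  obtain p e where p: "prime p" "e > 0" "q = p ^ e"
    using prime_power_q unfolding prime_power_def by blast
  then have "CHAR('a) = p"
    using CHAR_eq_prime_of_card[of p "e * 2"] card_field by (simp add: power_mult)
  with p that show ?thesis
    by blast
qed

lemma q_ge_2: "q \<ge> 2"
proof -
  obtain e where "e > 0" "q = CHAR('a) ^ e"
    by (rule q_eq_CHAR_power)
  moreover have "CHAR('a) \<ge> 2"
    using prime_CHAR prime_ge_2_nat by blast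
  ultimately show ?thesis
    using self_le_power[of "CHAR('a)" e] by linarith
qed

lemma frob_add: "(x + y :: 'a) ^ q = x ^ q + y ^ q"
  using freshmans_dream'[OF prime_CHAR] by (rule q_eq_CHAR_power) blast

lemma frob_sum: "(\<Sum>i\<in>I. f i :: 'a) ^ q = (\<Sum>i\<in>I. f i ^ q)"
  using freshmans_dream_sum'[OF prime_CHAR] by (rule q_eq_CHAR_power) blast

lemma frob_minus: "(- x :: 'a) ^ q = - (x ^ q)"
proof -
  have "x ^ q + (- x) ^ q = 0"
    using frob_add[of x "- x"] q_ge_2 by (simp add: power_0_left)
  then show ?thesis
    by (simp add: eq_neg_iff_add_eq_0 add.commute)
qed

lemma frob_diff: "(x - y :: 'a) ^ q = x ^ q - y ^ q"
  using frob_add[of x "- y"] by (simp add: frob_minus)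

lemma frob_frob: "(x ^ q) ^ q = (x :: 'a)"
  using finite_field_power_card[of x] card_field by (simp add: power2_eq_square power_mult)

definition xq_minus_x :: "'a poly" where
  "xq_minus_x = monom 1 q - [:0, 1:]"

lemma poly_xq_minus_x: "poly xq_minus_x x = x ^ q - x"
  by (simp add: xq_minus_x_def poly_monom)

lemma degree_xq_minus_x: "degree xq_minus_x \<le> q"
  unfolding xq_minus_x_def by (intro degree_diff_le) (use q_ge_2 in \<open>auto simp: degree_monom_le\<close>)

lemma xq_minus_x_nonzero: "xq_minus_x \<noteq> 0"
proof -
  have "coeff xq_minus_x q = 1"
    using q_ge_2 by (simp add: xq_minus_x_def coeff_pCons split: nat.split)
  then show ?thesis
    by auto
qed

lemma card_subfield_q_le: "card (subfield_q q :: 'a set) \<le> q"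
proof -
  have "subfield_q q = {x. poly xq_minus_x x = 0}"
    by (simp add: subfield_q_def poly_xq_minus_x)
  then show ?thesis
    using card_poly_roots_bound[OF xq_minus_x_nonzero] degree_xq_minus_x by simp
qed

lemma power_q_minus_1_outside_subfield_q:
  fixes x :: 'a
  assumes "x \<notin> subfield_q q"
  shows "(x ^ q - x) ^ (q - 1) = - 1"
proof -
  define y where "y = x ^ q - x"
  have "y \<noteq> 0"
    using assms by (simp add: y_def subfield_q_def)
  have "y * (y ^ (q - 1) + 1) = y ^ Suc (q - 1) + y"
    by (simp add: distrib_left)
  also have "Suc (q - 1) = q"
    using q_ge_2 by simp
  also have "y ^ q = - y"
    by (simp add: y_def frob_diff frob_frob)
  finally have "y ^ (q - 1) + 1 = 0"
    using \<open>y \<noteq> 0\<close> by simp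
  then show ?thesis
    unfolding y_def by (simp add: eq_neg_iff_add_eq_0)
qed

text \<open>The elements outside \<open>\<bbbF>\<^sub>q\<close> are roots of \<open>(X\<^sup>q - X)\<^sup>q\<^sup>-\<^sup>1 + 1\<close>, so there are at most
  \<open>q(q - 1)\<close> of them.\<close>

lemma card_subfield_q: "card (subfield_q q :: 'a set) = q"
proof -
  define Q where "Q = xq_minus_x ^ (q - 1) + 1"
  have "poly Q 0 = 1"
    using q_ge_2 by (simp add: Q_def poly_xq_minus_x power_0_left)
  then have "Q \<noteq> 0"
    by auto
  have "degree (xq_minus_x ^ (q - 1)) \<le> q * (q - 1)"
    using degree_power_le[of xq_minus_x "q - 1"] degree_xq_minus_x
      mult_right_mono[of "degree xq_minus_x" q "q - 1"]
    by linarith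
  then have "degree Q \<le> q * (q - 1)"
    unfolding Q_def by (intro degree_add_le) simp_all
  have "UNIV = subfield_q q \<union> {x. poly Q x = 0}"
    using power_q_minus_1_outside_subfield_q by (auto simp: Q_def poly_xq_minus_x)
  then have "card (UNIV :: 'a set) \<le> card (subfield_q q :: 'a set) + card {x. poly Q x = 0}"
    by (metis card_Un_le)
  then have "q * q \<le> card (subfield_q q :: 'a set) + q * (q - 1)"
    using card_poly_roots_bound[OF \<open>Q \<noteq> 0\<close>] \<open>degree Q \<le> q * (q - 1)\<close> card_field
    by (simp add: power2_eq_square)
  moreover have "q * (q - 1) = q * q - q" "q \<le> q * q"
    by (simp_all add: diff_mult_distrib2)
  ultimately show ?thesis
    using card_subfield_q_le by linarith
qed

definition frobp :: "'a poly \<Rightarrow> 'a poly" where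
  "frobp p = map_poly (\<lambda>x. x ^ q) p"

lemma coeff_frobp: "coeff (frobp p) i = coeff p i ^ q"
  using q_ge_2 by (simp add: frobp_def coeff_map_poly)

lemma frobp_add: "frobp (a + b) = frobp a + frobp b"
  by (simp add: poly_eq_iff coeff_frobp frob_add)

lemma frobp_diff: "frobp (a - b) = frobp a - frobp b"
  by (simp add: poly_eq_iff coeff_frobp frob_diff)

lemma frobp_mult: "frobp (a * b) = frobp a * frobp b"
  by (simp add: poly_eq_iff coeff_frobp coeff_mult frob_sum power_mult_distrib)

lemma frobp_1: "frobp 1 = 1"
  using q_ge_2 by (simp add: poly_eq_iff coeff_frobp coeff_1)

lemma frobp_prod: "frobp (\<Prod>i\<in>I. f i) = (\<Prod>i\<in>I. frobp (f i))"
  by (induction I rule: infinite_finite_induct) (simp_all add: frobp_1 frobp_mult)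

lemma frobp_linear: "frobp [:a, c:] = [:a ^ q, c ^ q:]"
  using q_ge_2 by (simp add: poly_eq_iff coeff_frobp coeff_pCons split: nat.split)

lemma frobp_xn_minus_1: "frobp (xn_minus_1 n) = xn_minus_1 n"
  using q_ge_2 frob_minus[of 1] by (simp add: poly_eq_iff coeff_frobp xn_minus_1_def coeff_monom coeff_1)

lemma degree_frobp: "degree (frobp p) = degree p"
  using q_ge_2 unfolding frobp_def by (intro degree_map_poly) simp

lemma frobp_eq_self_iff: "frobp p = p \<longleftrightarrow> (\<forall>i. coeff p i \<in> subfield_q q)"
  by (simp add: poly_eq_iff coeff_frobp subfield_q_def)

text \<open>By uniqueness of division with remainder, as \<open>frobp\<close> preserves its defining equations.\<close>

lemma frobp_div_mod:
  assumes "frobp p = p" "frobp d = d"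
  shows "frobp (p div d) = p div d" "frobp (p mod d) = p mod d"
proof -
  have "(p div d, p mod d) = (frobp (p div d), frobp (p mod d))"
  proof (induction rule: euclidean_relation_polyI)
    case by0
    then show ?case
      using assms(1) by (simp add: frobp_def)
  next
    case divides
    then have "frobp (p div d) * d = p"
      using assms by (metis frobp_mult dvd_div_mult_self)
    then show ?case
      using divides q_ge_2 by (simp add: poly_eq_iff coeff_frobp)
  next
    case euclidean_relation
    then have "degree (frobp (p mod d)) < degree d"
      by (simp add: degree_frobp degree_mod_less' mod_eq_0_iff_dvd)
    moreover have "frobp (p div d) * d + frobp (p mod d) = p"
      using assms by (metis frobp_add frobp_mult div_mult_mod_eq)
    ultimately show ?case
      by simp
  qed
  then show "frobp (p div d) = p div d" "frobp (p mod d) = p mod d"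
    by simp_all
qed

definition subfield_polys_below :: "nat \<Rightarrow> 'a poly set" where
  "subfield_polys_below k = {r. (\<forall>i. coeff r i \<in> subfield_q q) \<and> (\<forall>i\<ge>k. coeff r i = 0)}"

lemma card_subfield_polys_below: "card (subfield_polys_below k) = q ^ k"
proof -
  have "0 \<in> (subfield_q q :: 'a set)"
    using q_ge_2 by (simp add: subfield_q_def)
  then show ?thesis
    unfolding subfield_polys_below_def
    by (simp add: card_polys_coeffs_in_below card_subfield_q)
qed

end

section \<open>Cyclic codes over \<open>\<bbbF>\<^sub>q\<close> with inverse-closed defining sets\<close>

locale inverse_closed_cyclic_code = field_of_square_order q field
  for q and field :: "'a::{field,finite} itself" +
  fixes n :: nat and Z :: "'a set"
  assumes n_pos: "n > 0" and n_dvd: "n dvd q + 1"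
    and roots_of_unity: "\<And>\<beta>. \<beta> \<in> Z \<Longrightarrow> \<beta> ^ n = 1"
    and inverse_closed: "\<And>\<beta>. \<beta> \<in> Z \<Longrightarrow> inverse \<beta> \<in> Z"
begin

lemma power_q_eq_inverse:
  assumes "\<beta> \<in> Z"
  shows "\<beta> ^ q = inverse \<beta>"
proof -
  obtain k where "q + 1 = n * k"
    using n_dvd by blast
  then have "\<beta> ^ q * \<beta> = 1"
    using roots_of_unity[OF assms] by (metis power_Suc2 Suc_eq_plus1 power_mult power_one)
  then show ?thesis
    using inverse_unique[of \<beta> "\<beta> ^ q"] by (simp add: mult.commute)
qed

lemma frobp_gen_poly: "frobp (gen_poly Z) = gen_poly Z"
proof -
  have "frobp (gen_poly Z) = (\<Prod>\<beta>\<in>Z. [:- inverse \<beta>, 1:])"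
    unfolding gen_poly_def frobp_prod
    by (intro prod.cong) (simp_all add: frobp_linear frob_minus power_q_eq_inverse)
  also have "\<dots> = (\<Prod>\<beta>\<in>inverse ` Z. [:- \<beta>, 1:])"
    by (simp add: prod.reindex inj_on_def)
  also have "inverse ` Z = Z"
    using inverse_closed by (auto intro: image_eqI[of _ inverse, OF inverse_inverse_eq[symmetric]])
  finally show ?thesis
    by (simp add: gen_poly_def)
qed

lemma gen_poly_dvd_xn_minus_1: "gen_poly Z dvd xn_minus_1 n"
  unfolding gen_poly_def using roots_of_unity by (intro prod_linear_factors_dvd) simp_all

lemma degree_gen_poly: "degree (gen_poly Z) = card Z"
  unfolding gen_poly_def by (simp add: degree_prod_eq_sum_degree)

definition check_poly :: "'a poly" where
  "check_poly = xn_minus_1 n div gen_poly Z"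

lemma xn_minus_1_eq: "xn_minus_1 n = gen_poly Z * check_poly"
  unfolding check_poly_def using gen_poly_dvd_xn_minus_1 by simp

lemma gen_poly_nonzero: "gen_poly Z \<noteq> 0"
  by (simp add: gen_poly_def)

lemma check_poly_nonzero: "check_poly \<noteq> 0"
  using xn_minus_1_eq xn_minus_1_nonzero[OF n_pos] by auto

lemma degree_check_poly: "degree check_poly = n - card Z" and card_le_n: "card Z \<le> n"
proof -
  have "n = card Z + degree check_poly"
    using xn_minus_1_eq degree_mult_eq[OF gen_poly_nonzero check_poly_nonzero] degree_gen_poly
    by (metis degree_xn_minus_1)
  then show "degree check_poly = n - card Z" "card Z \<le> n"
    by simp_all
qed

lemma frobp_check_poly: "frobp check_poly = check_poly"
  unfolding check_poly_def using frobp_div_mod(1)[OF frobp_xn_minus_1 frobp_gen_poly] .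

lemma mod_check_poly_eq_self_iff:
  "r mod check_poly = r \<longleftrightarrow> (\<forall>i\<ge>n - card Z. coeff r i = 0)"
proof -
  have "r mod check_poly = r \<longleftrightarrow> r = 0 \<or> degree r < degree check_poly"
  proof
    show "r mod check_poly = r \<Longrightarrow> r = 0 \<or> degree r < degree check_poly"
      by (metis degree_mod_less' check_poly_nonzero)
    show "r = 0 \<or> degree r < degree check_poly \<Longrightarrow> r mod check_poly = r"
      by (auto simp: mod_poly_less)
  qed
  then show ?thesis
    by (simp add: coeffs_above_zero_iff degree_check_poly)
qed

lemma cyclic_code_q_eq:
  "cyclic_code_q q n Z = (\<lambda>r. gen_poly Z * r) ` subfield_polys_below (n - card Z)"
proof -
  have below: "subfield_polys_below (n - card Z) = {r. frobp r = r \<and> r mod check_poly = r}"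
    by (auto simp: subfield_polys_below_def frobp_eq_self_iff mod_check_poly_eq_self_iff)
  have "cyclic_code_q q n Z = {gen_poly Z * (f mod check_poly) | f. frobp f = f}"
    unfolding cyclic_code_q_def xn_minus_1_eq frobp_eq_self_iff[symmetric]
    by (simp add: mult.commute mod_mult_mult1)
  also have "\<dots> = (\<lambda>r. gen_poly Z * r) ` {r. frobp r = r \<and> r mod check_poly = r}"
  proof
    show "{gen_poly Z * (f mod check_poly) | f. frobp f = f}
        \<subseteq> (\<lambda>r. gen_poly Z * r) ` {r. frobp r = r \<and> r mod check_poly = r}"
      using frobp_div_mod(2)[OF _ frobp_check_poly] by auto
    show "(\<lambda>r. gen_poly Z * r) ` {r. frobp r = r \<and> r mod check_poly = r}
        \<subseteq> {gen_poly Z * (f mod check_poly) | f. frobp f = f}"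
      by (auto intro!: exI)
  qed
  finally show ?thesis
    unfolding below .
qed

lemma card_cyclic_code_q: "card (cyclic_code_q q n Z) = q ^ (n - card Z)"
  unfolding cyclic_code_q_eq using gen_poly_nonzero
  by (simp add: card_image inj_on_def card_subfield_polys_below)

lemma code_dim_cyclic_code_q: "code_dim q (cyclic_code_q q n Z) = n - card Z"
  unfolding code_dim_def card_cyclic_code_q using q_ge_2
  by (intro the_equality) (simp_all add: power_inject_exp)

lemma cyclic_code_q_memD:
  assumes "c \<in> cyclic_code_q q n Z"
  shows "\<forall>i. coeff c i \<in> subfield_q q" "\<forall>i\<ge>n. coeff c i = 0" "\<forall>\<beta>\<in>Z. poly c \<beta> = 0"
proof -
  obtain r where r: "r \<in> subfield_polys_below (n - card Z)" "c = gen_poly Z * r"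
    using assms cyclic_code_q_eq by blast
  then show "\<forall>i. coeff c i \<in> subfield_q q"
    by (simp add: frobp_mult frobp_gen_poly subfield_polys_below_def flip: frobp_eq_self_iff)
  have "r = 0 \<or> degree r < n - card Z"
    using r(1) unfolding subfield_polys_below_def coeffs_above_zero_iff by blast
  then have "c = 0 \<or> degree c < n"
    using r(2) card_le_n by (cases "r = 0") (auto simp: degree_mult_eq gen_poly_nonzero degree_gen_poly)
  then show "\<forall>i\<ge>n. coeff c i = 0"
    by (simp add: coeffs_above_zero_iff)
  show "\<forall>\<beta>\<in>Z. poly c \<beta> = 0"
    using r(2) by (simp add: gen_poly_def poly_prod prod_zero_iff)
qed

lemma cyclic_code_q_diff:
  assumes "c \<in> cyclic_code_q q n Z" "c' \<in> cyclic_code_q q n Z"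
  shows "c - c' \<in> cyclic_code_q q n Z"
proof -
  obtain r r' where "r \<in> subfield_polys_below (n - card Z)" "r' \<in> subfield_polys_below (n - card Z)"
    "c = gen_poly Z * r" "c' = gen_poly Z * r'"
    using assms unfolding cyclic_code_q_eq by blast
  moreover from this have "r - r' \<in> subfield_polys_below (n - card Z)"
    by (simp add: subfield_polys_below_def frobp_diff flip: frobp_eq_self_iff)
  ultimately show ?thesis
    unfolding cyclic_code_q_eq by (metis image_eqI right_diff_distrib)
qed

lemma exists_codeword_vanishing_on:
  assumes "finite U" "card U < n - card Z"
  shows "\<exists>c\<in>cyclic_code_q q n Z. c \<noteq> 0 \<and> (\<forall>j\<in>U. coeff c j = 0)"
proof -
  let ?C = "cyclic_code_q q n Z"
  have "restrict (coeff c) U \<in> PiE U (\<lambda>_. subfield_q q)" if "c \<in> ?C" for c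
    using cyclic_code_q_memD(1)[OF that] by simp
  then have into: "(\<lambda>c. restrict (coeff c) U) ` ?C \<subseteq> PiE U (\<lambda>_. subfield_q q)"
    by blast
  have "card (PiE U (\<lambda>_. subfield_q q :: 'a set)) < card ?C"
    using assms q_ge_2 by (simp add: card_PiE card_subfield_q card_cyclic_code_q power_strict_increasing)
  then have "\<not> inj_on (\<lambda>c. restrict (coeff c) U) ?C"
    using card_inj_on_le[OF _ into] assms(1) by (meson finite_PiE finite not_le)
  then obtain c c' where "c \<in> ?C" "c' \<in> ?C" "c \<noteq> c'" "restrict (coeff c) U = restrict (coeff c') U"
    unfolding inj_on_def by blast
  moreover from this have "coeff c j = coeff c' j" if "j \<in> U" for j
    using that by (metis restrict_apply')
  ultimately show ?thesis
    by (intro bexI[of _ "c - c'"] conjI ballI cyclic_code_q_diff) auto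
qed

end

lemma set_mult_image:
  assumes "\<And>x y. f (x + y) = f x * f y"
  shows "set_mult (f ` X) (f ` Y) = f ` {x + y | x y. x \<in> X \<and> y \<in> Y}"
  unfolding set_mult_def by (force simp flip: assms)

lemma sumset_atLeastAtMost_int:
  fixes a b c d :: int
  assumes "a \<le> b" "c \<le> d"
  shows "{x + y | x y. x \<in> {a..b} \<and> y \<in> {c..d}} = {a + c..b + d}"
proof
  show "{a + c..b + d} \<subseteq> {x + y | x y. x \<in> {a..b} \<and> y \<in> {c..d}}"
  proof
    fix z assume "z \<in> {a + c..b + d}"
    then have "max a (z - d) \<in> {a..b} \<and> z - max a (z - d) \<in> {c..d}"
      using assms by auto
    then show "z \<in> {x + y | x y. x \<in> {a..b} \<and> y \<in> {c..d}}"
      by (intro CollectI exI[of _ "max a (z - d)"] exI[of _ "z - max a (z - d)"]) simp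
  qed
qed auto

locale LRC_construction =
  fixes q n m b dA :: nat and A B :: "'a::{field,finite} set" and C :: "'a poly set"
    and \<delta> :: int and \<alpha> :: 'a
  assumes prime_power_q: "prime_power q" and card_field: "card (UNIV :: 'a set) = q ^ 2"
    and odd_n: "odd n" and n_dvd: "n dvd q + 1"
    and \<alpha>: "primitive_root_unity n \<alpha>"
    and m_pos: "m > 0" and even_m: "even m"
    and coprime_b: "gcd b n = 1"
    and even_\<delta>: "even \<delta>" and \<delta>_ge: "2 \<le> \<delta>" and \<delta>_le: "2 * \<delta> \<le> int n - int m + 1"
  assumes A_def: "A = {1} \<union> {ipow n \<alpha> (s * ((int n + 2 * int j - 1) div 2) * int b) | s j.
                   s \<in> {1, -1} \<and> 1 \<le> j \<and> j \<le> m div 2}"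
    and B_def: "B = {ipow n \<alpha> (j * int b) | j. - ((\<delta> - 2) div 2) \<le> j \<and> j \<le> (\<delta> - 2) div 2}"
    and dA_def: "dA = min_dist n (dual_code n (cyclic_code n A))"
    and C_def: "C = cyclic_code_q q n (set_mult A B)"
begin

definition t :: nat where "t = n div 2"
definition u :: nat where "u = m div 2"
definition h :: nat where "h = nat ((\<delta> - 2) div 2)"

lemma n_eq: "n = 2 * t + 1"
  using odd_n unfolding t_def by presburger

lemma m_eq: "m = 2 * u"
  using even_m unfolding u_def by simp

lemma \<delta>_eq: "\<delta> = 2 * int h + 2"
  using even_\<delta> \<delta>_ge unfolding h_def by (auto elim!: evenE)

lemma u_pos: "u \<ge> 1"
  using m_pos m_eq by simp

lemma t_ge: "u + 2 * h + 1 \<le> t"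
  using \<delta>_le n_eq m_eq \<delta>_eq by linarith

lemma n_pos: "n > 0"
  using n_eq by simp

lemma \<alpha>_root: "\<alpha> ^ n = 1"
  using \<alpha> by (simp add: primitive_root_unity_def)

definition \<omega> :: 'a where "\<omega> = \<alpha> ^ b"

lemma primitive_\<omega>: "primitive_root_unity n \<omega>"
  unfolding \<omega>_def using \<alpha> coprime_b coprime_iff_gcd_eq_1 by (blast intro: primitive_root_unity_power)

lemma \<omega>_root: "\<omega> ^ n = 1"
  using primitive_\<omega> by (simp add: primitive_root_unity_def)

abbreviation W :: "int \<Rightarrow> 'a" where "W e \<equiv> ipow n \<omega> e"

lemma W_add: "W (x + y) = W x * W y"
  by (rule ipow_add[OF n_pos \<omega>_root])

lemma W_root: "W e ^ n = 1"
  by (rule ipow_root[OF n_pos \<omega>_root])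

lemma W_nonzero: "W e \<noteq> 0"
  by (rule ipow_nonzero[OF n_pos \<omega>_root])

lemma W_eq_1_iff: "W e = 1 \<longleftrightarrow> e mod int n = 0"
  using ipow_eq_iff[OF primitive_\<omega>, of e 0] ipow_0[OF \<omega>_root] by simp

lemma W_image_shift: "W ` ((+) (int n) ` X) = W ` X"
  using ipow_add_multiple[of n \<omega> _ 1] by (auto simp: image_image add.commute)

lemma W_in_image_iff: "W e \<in> W ` X \<longleftrightarrow> (\<exists>x\<in>X. e mod int n = x mod int n)"
  using ipow_eq_iff[OF primitive_\<omega>] by auto

definition A_exponents :: "int set" where
  "A_exponents = {0} \<union> {int t + 1..int t + int u} \<union> {- (int t + int u)..- (int t + 1)}"

definition AB_exponents :: "int set" where
  "AB_exponents = {- int h..int h} \<union> {int t + 1 - int u - int h..int t + int u + int h}"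

lemma A_eq: "A = W ` A_exponents"
proof -
  have exponent: "ipow n \<alpha> (s * ((int n + 2 * int j - 1) div 2) * int b) = W (s * (int t + int j))"
    for s j
  proof -
    have "(int n + 2 * int j - 1) div 2 = int t + int j"
      using n_eq by simp
    then show ?thesis
      by (simp add: \<omega>_def ipow_power_base[OF n_pos \<alpha>_root])
  qed
  have shifted: "{int t + int j | j. 1 \<le> j \<and> j \<le> u} = {int t + 1..int t + int u}"
  proof -
    have "e = int t + int (nat (e - int t)) \<and> 1 \<le> nat (e - int t) \<and> nat (e - int t) \<le> u"
      if "e \<in> {int t + 1..int t + int u}" for e
      using that by auto
    then show ?thesis
      by fastforce
  qed
  have sign: "{F s j | s j. s \<in> {1::int, -1} \<and> P j} = {F 1 j | j. P j} \<union> {F (- 1) j | j. P j}"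
    for F :: "int \<Rightarrow> nat \<Rightarrow> 'a" and P
    by blast
  have "A = {W 0} \<union> {W (int t + int j) | j. 1 \<le> j \<and> j \<le> u}
      \<union> {W (- (int t + int j)) | j. 1 \<le> j \<and> j \<le> u}"
    unfolding A_def exponent u_def[symmetric] sign using ipow_0[OF \<omega>_root] by simp
  also have "{W (int t + int j) | j. 1 \<le> j \<and> j \<le> u} = W ` {int t + 1..int t + int u}"
    unfolding shifted[symmetric] by blast
  also have "{W (- (int t + int j)) | j. 1 \<le> j \<and> j \<le> u} = W ` uminus ` {int t + 1..int t + int u}"
    unfolding shifted[symmetric] by blast
  finally show ?thesis
    by (simp add: A_exponents_def image_Un)
qed

lemma B_eq: "B = W ` {- int h..int h}"
proof -
  have "(\<delta> - 2) div 2 = int h"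
    using \<delta>_eq by simp
  then show ?thesis
    unfolding B_def \<omega>_def by (auto simp: ipow_power_base[OF n_pos \<alpha>_root])
qed

lemma AB_eq: "set_mult A B = W ` AB_exponents"
proof -
  let ?H = "{- int h..int h}"
  have sumset_Un: "{x + y | x y. x \<in> X \<union> X' \<and> y \<in> Y} = {x + y | x y. x \<in> X \<and> y \<in> Y} \<union> {x + y | x y. x \<in> X' \<and> y \<in> Y}"
    for X X' Y :: "int set"
    by blast
  have zero: "{x + y | x y. x \<in> {0} \<and> y \<in> Y} = Y" for Y :: "int set"
    by auto
  have pos: "{x + y | x y. x \<in> {int t + 1..int t + int u} \<and> y \<in> ?H} = {int t + 1 - int h..int t + int u + int h}"
    using sumset_atLeastAtMost_int[of "int t + 1" "int t + int u" "- int h" "int h"] u_pos by simp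
  have neg: "{x + y | x y. x \<in> {- (int t + int u)..- (int t + 1)} \<and> y \<in> ?H}
      = {- int t - int u - int h..int h - int t - 1}"
    using sumset_atLeastAtMost_int[of "- (int t + int u)" "- (int t + 1)" "- int h" "int h"] u_pos by simp
  have "set_mult A B = W ` ?H \<union> (W ` {int t + 1 - int h..int t + int u + int h}
      \<union> W ` ((+) (int n) ` {- int t - int u - int h..int h - int t - 1}))"
    unfolding A_eq B_eq set_mult_image[of W, OF W_add] W_image_shift A_exponents_def sumset_Un zero pos neg
    by (simp add: image_Un Un_assoc)
  also have "(+) (int n) ` {- int t - int u - int h..int h - int t - 1} = {int t + 1 - int u - int h..int t + int h}"
    using n_eq by simp
  also have "W ` {int t + 1 - int h..int t + int u + int h} \<union> W ` {int t + 1 - int u - int h..int t + int h}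
      = W ` {int t + 1 - int u - int h..int t + int u + int h}"
    by (auto simp flip: image_Un)
  finally show ?thesis
    unfolding AB_exponents_def by (simp add: image_Un)
qed

lemma inj_on_W_AB_exponents: "inj_on W AB_exponents"
proof
  fix x y assume "x \<in> AB_exponents" "y \<in> AB_exponents" "W x = W y"
  then have "(x + int h) mod int n = (y + int h) mod int n"
    using ipow_eq_iff[OF primitive_\<omega>] by (metis mod_add_left_eq)
  moreover have "0 \<le> e + int h \<and> e + int h < int n" if "e \<in> AB_exponents" for e
    using that t_ge n_eq unfolding AB_exponents_def by auto
  ultimately show "x = y"
    using \<open>x \<in> AB_exponents\<close> \<open>y \<in> AB_exponents\<close> by (metis add_right_cancel mod_pos_pos_trivial)
qed

lemma card_AB: "card (set_mult A B) = 2 * u + 4 * h + 1"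
proof -
  have "card AB_exponents = card {- int h..int h} + card {int t + 1 - int u - int h..int t + int u + int h}"
    unfolding AB_exponents_def using t_ge by (intro card_Un_disjoint) auto
  then show ?thesis
    unfolding AB_eq card_image[OF inj_on_W_AB_exponents] using t_ge by simp
qed

lemma AB_inverse_closed:
  assumes "\<beta> \<in> set_mult A B"
  shows "inverse \<beta> \<in> set_mult A B"
proof -
  obtain e where e: "e \<in> AB_exponents" "\<beta> = W e"
    using assms unfolding AB_eq by blast
  then have "inverse \<beta> = W (- e)"
    using W_add[of e "- e"] ipow_0[OF \<omega>_root] by (simp add: inverse_unique)
  moreover have "\<exists>x\<in>AB_exponents. - e mod int n = x mod int n"
  proof (cases "e \<in> {- int h..int h}")
    case True
    then show ?thesis
      by (intro bexI[of _ "- e"]) (auto simp: AB_exponents_def)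
  next
    case False
    with e(1) show ?thesis
      using n_eq by (intro bexI[of _ "int n - e"]) (auto simp: AB_exponents_def)
  qed
  ultimately show ?thesis
    unfolding AB_eq by (simp add: W_in_image_iff)
qed

lemma AB_roots_of_unity: "\<beta> \<in> set_mult A B \<Longrightarrow> \<beta> ^ n = 1"
  unfolding AB_eq using W_root by blast

end

sublocale LRC_construction \<subseteq> inverse_closed_cyclic_code q "TYPE('a)" n "set_mult A B"
  by unfold_locales
    (use prime_power_q card_field n_pos n_dvd AB_roots_of_unity AB_inverse_closed in auto)

context LRC_construction
begin

lemma int_code_dim_C: "int (code_dim q C) = int n - int m - 2 * \<delta> + 3"
  unfolding C_def code_dim_cyclic_code_q card_AB using t_ge n_eq m_eq \<delta>_eq by (simp add: of_nat_diff)

subsection \<open>The dual distance of the code with defining set \<open>A\<close>\<close>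

lemma A_roots_of_unity: "\<beta> \<in> A \<Longrightarrow> \<beta> ^ n = 1"
  unfolding A_eq using W_root by blast

lemma A_nonzero: "\<beta> \<in> A \<Longrightarrow> \<beta> \<noteq> 0"
  unfolding A_eq using W_nonzero by auto

lemma cyclic_code_A_iff:
  "c \<in> cyclic_code n A \<longleftrightarrow> (\<forall>i\<ge>n. coeff c i = 0) \<and> (\<forall>\<beta>\<in>A. poly c \<beta> = 0)"
  using cyclic_code_iff[OF n_pos _ A_roots_of_unity] by simp

abbreviation D :: "'a poly set" where "D \<equiv> dual_code n (cyclic_code n A)"

lemma dual_orthogonal: "v \<in> D \<Longrightarrow> c \<in> cyclic_code n A \<Longrightarrow> (\<Sum>i<n. coeff v i * coeff c i) = 0"
  unfolding dual_code_def by blast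

lemma dual_coeffs_above: "v \<in> D \<Longrightarrow> \<forall>i\<ge>n. coeff v i = 0"
  unfolding dual_code_def by (auto intro: coeff_eq_0)

text \<open>Since \<open>1 \<in> A\<close>, the all-one word is a nonzero dual codeword, so \<open>dA\<close> is a minimum over a
  nonempty set.\<close>

lemma all_one_in_dual: "poly_of_fun n (\<lambda>_. 1) \<in> D"
proof -
  have "(\<Sum>i<n. coeff (poly_of_fun n (\<lambda>_. 1)) i * coeff c i) = 0" if "c \<in> cyclic_code n A" for c
  proof -
    have "poly c 1 = (\<Sum>i<n. coeff c i * 1 ^ i)"
      using that unfolding cyclic_code_A_iff by (intro poly_eq_sum_below) simp
    then have "(\<Sum>i<n. coeff (poly_of_fun n (\<lambda>_. 1)) i * coeff c i) = poly c 1"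
      by (simp add: coeff_poly_of_fun)
    also have "\<dots> = 0"
      using that A_def unfolding cyclic_code_A_iff by blast
    finally show ?thesis .
  qed
  moreover have "degree (poly_of_fun n (\<lambda>_. 1 :: 'a)) < n"
    using n_pos coeffs_above_zero_iff[of n "poly_of_fun n (\<lambda>_. 1)"] by (auto simp: coeff_poly_of_fun)
  ultimately show ?thesis
    unfolding dual_code_def by blast
qed

lemma dual_minimal_word: obtains v where "v \<in> D" "v \<noteq> 0" "weight n v = dA"
proof -
  have "coeff (poly_of_fun n (\<lambda>_. 1 :: 'a)) 0 = 1"
    using n_pos by (simp add: coeff_poly_of_fun)
  then have "poly_of_fun n (\<lambda>_. 1 :: 'a) \<noteq> 0"
    by auto
  then show ?thesis
    using min_dist_attained[OF all_one_in_dual] that unfolding dA_def by blast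
qed

lemma W_times_A_ne_1:
  assumes "1 \<le> k" "k \<le> int t - int u" "\<beta> \<in> A"
  shows "W k * \<beta> \<noteq> 1"
proof -
  obtain e where e: "e \<in> A_exponents" "\<beta> = W e"
    using assms(3) unfolding A_eq by blast
  have "(k + e) mod int n \<noteq> 0"
    using e(1) assms(1,2) n_eq by (intro int_mod_nonzero) (auto simp: A_exponents_def)
  then show ?thesis
    using e(2) W_eq_1_iff W_add by metis
qed

lemma dual_weight_ge:
  assumes "v \<in> D" "v \<noteq> 0"
  shows "t - u + 1 \<le> weight n v"
  unfolding weight_def
proof (rule bch_bound[OF primitive_\<omega>, where s = 1])
  show "\<exists>i<n. coeff v i \<noteq> 0"
    using exists_coeff_below_nonzero[OF dual_coeffs_above[OF assms(1)] assms(2)] .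
  fix l assume "l < t - u"
  then have "poly_of_fun n (\<lambda>i. W (1 + int l) ^ i) \<in> cyclic_code n A"
    using W_times_A_ne_1[of "1 + int l"] A_roots_of_unity W_root
    by (intro geometric_poly_in_cyclic_code[OF n_pos]) auto
  then have "(\<Sum>i<n. coeff v i * coeff (poly_of_fun n (\<lambda>i. W (1 + int l) ^ i)) i) = 0"
    by (rule dual_orthogonal[OF assms(1)])
  then show "(\<Sum>i<n. coeff v i * W (1 + int l) ^ i) = 0"
    by (simp add: coeff_poly_of_fun)
qed

lemma dA_ge: "t - u + 1 \<le> dA"
  using dual_minimal_word dual_weight_ge by metis

subsection \<open>Locality\<close>

lemma C_memD:
  assumes "c \<in> C"
  shows "\<forall>i\<ge>n. coeff c i = 0" "\<forall>\<beta>\<in>set_mult A B. poly c \<beta> = 0"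
  using cyclic_code_q_memD[of c] assms unfolding C_def by blast+

lemma twisted_rotation_in_cyclic_code_A:
  assumes "c \<in> C" "\<gamma> \<in> B"
  shows "poly_of_fun n (\<lambda>i. coeff c ((i + \<tau>) mod n) * \<gamma> ^ ((i + \<tau>) mod n)) \<in> cyclic_code n A"
    (is "?w \<in> _")
proof -
  have "poly ?w \<beta> = 0" if "\<beta> \<in> A" for \<beta>
  proof -
    have "\<beta> * \<gamma> \<in> set_mult A B"
      using that assms(2) unfolding set_mult_def by blast
    moreover have "\<gamma> ^ n = 1"
      using assms(2) W_root unfolding B_eq by blast
    ultimately have "\<beta> ^ \<tau> * poly ?w \<beta> = 0"
      using poly_twisted_rotation[OF n_pos C_memD(1)[OF assms(1)] A_roots_of_unity[OF that]] C_memD(2)[OF assms(1)]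
      by simp
    then show ?thesis
      using A_nonzero[OF that] by simp
  qed
  then show ?thesis
    unfolding cyclic_code_A_iff by (simp add: coeff_poly_of_fun)
qed

lemma dual_twisted_rotation_sum:
  assumes "v \<in> D" "c \<in> C" "\<gamma> \<in> B"
  shows "(\<Sum>i<n. coeff v i * coeff c ((i + \<tau>) mod n) * \<gamma> ^ i) = 0"
proof -
  have \<gamma>: "\<gamma> ^ n = 1" "\<gamma> \<noteq> 0"
    using assms(3) W_root W_nonzero unfolding B_eq by auto
  have "0 = (\<Sum>i<n. coeff v i * coeff (poly_of_fun n (\<lambda>i. coeff c ((i + \<tau>) mod n) * \<gamma> ^ ((i + \<tau>) mod n))) i)"
    using dual_orthogonal[OF assms(1) twisted_rotation_in_cyclic_code_A[OF assms(2,3)]] by simp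
  also have "\<dots> = (\<Sum>i<n. \<gamma> ^ \<tau> * (coeff v i * coeff c ((i + \<tau>) mod n) * \<gamma> ^ i))"
  proof (rule sum.cong[OF refl])
    fix i assume "i \<in> {..<n}"
    moreover have "\<gamma> ^ ((i + \<tau>) mod n) = \<gamma> ^ \<tau> * \<gamma> ^ i"
      using power_mod_exponent[OF \<gamma>(1), of "i + \<tau>"] by (simp add: power_add mult.commute)
    ultimately show "coeff v i * coeff (poly_of_fun n (\<lambda>i. coeff c ((i + \<tau>) mod n) * \<gamma> ^ ((i + \<tau>) mod n))) i
        = \<gamma> ^ \<tau> * (coeff v i * coeff c ((i + \<tau>) mod n) * \<gamma> ^ i)"
      by (simp add: coeff_poly_of_fun mult_ac)
  qed
  finally show ?thesis
    using \<gamma>(2) by (simp flip: sum_distrib_left)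
qed

lemma local_weight_ge:
  assumes "v \<in> D" "c \<in> C" "\<exists>i<n. coeff v i * coeff c ((i + \<tau>) mod n) \<noteq> 0"
  shows "2 * h + 2 \<le> card {i. i < n \<and> coeff v i * coeff c ((i + \<tau>) mod n) \<noteq> 0}"
proof -
  have "2 * h + 1 + 1 \<le> card {i. i < n \<and> coeff v i * coeff c ((i + \<tau>) mod n) \<noteq> 0}"
  proof (rule bch_bound[OF primitive_\<omega>, where s = "- int h"])
    fix l assume "l < 2 * h + 1"
    then have "W (- int h + int l) \<in> B"
      unfolding B_eq by auto
    then show "(\<Sum>i<n. coeff v i * coeff c ((i + \<tau>) mod n) * W (- int h + int l) ^ i) = 0"
      by (rule dual_twisted_rotation_sum[OF assms(1,2)])
  qed (rule assms(3))
  then show ?thesis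
    by simp
qed

lemma is_LRC_C: "is_LRC n C (int dA - \<delta> + 1) \<delta>"
  unfolding is_LRC_def
proof (intro conjI allI impI)
  show "1 \<le> int dA - \<delta> + 1"
    using dA_ge t_ge \<delta>_eq by linarith
  show "2 \<le> \<delta>"
    by (rule \<delta>_ge)
  fix i0 assume "i0 < n"
  obtain v where v: "v \<in> D" "v \<noteq> 0" "weight n v = dA"
    by (rule dual_minimal_word)
  obtain j0 where j0: "j0 < n" "coeff v j0 \<noteq> 0"
    using exists_coeff_below_nonzero[OF dual_coeffs_above[OF v(1)] v(2)] by blast
  define \<tau> where "\<tau> = i0 + n - j0"
  define \<rho> where "\<rho> i = (i + \<tau>) mod n" for i
  define Sv where "Sv = {i. i < n \<and> coeff v i \<noteq> 0}"
  have inj: "inj_on \<rho> Sv"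
    unfolding \<rho>_def Sv_def by (rule inj_on_subset[OF inj_on_add_mod]) auto
  show "has_locality n C (int dA - \<delta> + 1) \<delta> i0"
    unfolding has_locality_def
  proof (intro exI[of _ "\<rho> ` Sv"] conjI ballI impI)
    show "\<rho> ` Sv \<subseteq> {..<n}"
      unfolding \<rho>_def using n_pos by auto
    have "\<rho> j0 = i0"
      using j0 \<open>i0 < n\<close> by (simp add: \<rho>_def \<tau>_def)
    then show "i0 \<in> \<rho> ` Sv"
      using j0 unfolding Sv_def by blast
    show "int (card (\<rho> ` Sv)) \<le> int dA - \<delta> + 1 + \<delta> - 1"
      using v(3) card_image[OF inj] by (simp add: Sv_def weight_def)
    fix c assume c: "c \<in> C" and "\<exists>j\<in>\<rho> ` Sv. coeff c j \<noteq> 0"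
    then have "\<exists>i<n. coeff v i * coeff c ((i + \<tau>) mod n) \<noteq> 0"
      unfolding Sv_def \<rho>_def by auto
    then have "2 * h + 2 \<le> card {i. i < n \<and> coeff v i * coeff c (\<rho> i) \<noteq> 0}"
      using local_weight_ge[OF v(1) c] unfolding \<rho>_def by blast
    also have "\<dots> = card (\<rho> ` {i. i < n \<and> coeff v i * coeff c (\<rho> i) \<noteq> 0})"
      using inj by (intro card_image[symmetric] inj_on_subset[OF inj]) (auto simp: Sv_def)
    also have "\<rho> ` {i. i < n \<and> coeff v i * coeff c (\<rho> i) \<noteq> 0} = {j \<in> \<rho> ` Sv. coeff c j \<noteq> 0}"
      unfolding Sv_def by auto
    finally show "\<delta> \<le> int (card {j \<in> \<rho> ` Sv. coeff c j \<noteq> 0})"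
      using \<delta>_eq by simp
  qed
qed

subsection \<open>Minimum distance and optimality\<close>

lemma weight_C_ge:
  assumes "c \<in> C" "c \<noteq> 0"
  shows "2 * u + 2 * h + 1 \<le> weight n c"
  unfolding weight_def
proof (rule bch_bound[OF primitive_\<omega>, where s = "int t + 1 - int u - int h"])
  show "\<exists>i<n. coeff c i \<noteq> 0"
    by (rule exists_coeff_below_nonzero[OF C_memD(1)[OF assms(1)] assms(2)])
  fix l assume "l < 2 * u + 2 * h"
  then have "W (int t + 1 - int u - int h + int l) \<in> set_mult A B"
    unfolding AB_eq AB_exponents_def by auto
  then show "(\<Sum>i<n. coeff c i * W (int t + 1 - int u - int h + int l) ^ i) = 0"
    using C_memD[OF assms(1)] by (simp add: poly_eq_sum_below[symmetric])
qed

lemma overlap_with_dual_support: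
  assumes "v \<in> D" "c \<in> C" "card {i. i < n \<and> coeff v i \<noteq> 0 \<and> coeff c i \<noteq> 0} \<le> 2 * h + 1"
  shows "coeff v i = 0 \<or> coeff c i = 0"
proof (rule ccontr)
  assume "\<not> (coeff v i = 0 \<or> coeff c i = 0)"
  moreover have "i < n"
    using calculation dual_coeffs_above[OF assms(1)] not_le by blast
  ultimately have "\<exists>i<n. coeff v i * coeff c ((i + 0) mod n) \<noteq> 0"
    by auto
  then have "2 * h + 2 \<le> card {i. i < n \<and> coeff v i * coeff c ((i + 0) mod n) \<noteq> 0}"
    by (rule local_weight_ge[OF assms(1,2)])
  also have "{i. i < n \<and> coeff v i * coeff c ((i + 0) mod n) \<noteq> 0}
      = {i. i < n \<and> coeff v i \<noteq> 0 \<and> coeff c i \<noteq> 0}"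
    by auto
  finally show False
    using assms(3) by simp
qed

text \<open>Dimension counting: a codeword vanishing on \<open>dim C - 1\<close> coordinates, all but \<open>2h + 1\<close> of
  them off the support of a minimal dual codeword, must vanish on that whole support.\<close>

lemma exists_codeword_vanishing_on_dual_support:
  assumes "\<delta> - 2 < int n - int m - int dA" "v \<in> D" "weight n v = dA"
  defines "S \<equiv> {i. i < n \<and> coeff v i \<noteq> 0}"
  obtains c R where "c \<in> C" "c \<noteq> 0" "R \<subseteq> {..<n} - S" "card R = n - (2 * u + 2 * h + 1) - dA"
    "\<forall>j\<in>S \<union> R. coeff c j = 0"
proof -
  define k where "k = n - (2 * u + 4 * h + 1)"
  have S: "S \<subseteq> {..<n}" "finite S" "card S = dA"
    using assms(3) by (auto simp: S_def weight_def)
  have dA_le: "dA \<le> k + 2 * h" and dA_ge': "2 * h + 1 \<le> dA" and "2 \<le> k"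
    and k: "k + 2 * h = n - (2 * u + 2 * h + 1)"
    using assms(1) dA_ge n_eq m_eq \<delta>_eq t_ge unfolding k_def by linarith+
  obtain S' where S': "S' \<subseteq> S" "card S' = dA - (2 * h + 1)" "finite S'"
    using obtain_subset_with_card_n[of "dA - (2 * h + 1)" S] S by auto
  have "card ({..<n} - S) = n - dA"
    using S by (simp add: card_Diff_subset)
  moreover have "k + 2 * h - dA \<le> n - dA"
    unfolding k by (intro diff_le_mono) simp
  ultimately obtain R where R: "R \<subseteq> {..<n} - S" "card R = k + 2 * h - dA" "finite R"
    using obtain_subset_with_card_n[of "k + 2 * h - dA" "{..<n} - S"] by auto
  have "S' \<inter> R = {}"
    using S'(1) R(1) by auto
  then have "card (S' \<union> R) < k"
    using card_Un_disjoint[OF S'(3) R(3)] S'(2) R(2) dA_le dA_ge' \<open>2 \<le> k\<close> by simp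
  then have "\<exists>c\<in>C. c \<noteq> 0 \<and> (\<forall>j\<in>S' \<union> R. coeff c j = 0)"
    unfolding C_def using S'(3) R(3) by (intro exists_codeword_vanishing_on) (simp_all add: card_AB k_def)
  then obtain c where c: "c \<in> C" "c \<noteq> 0" "\<forall>j\<in>S' \<union> R. coeff c j = 0"
    by blast
  have "{i. i < n \<and> coeff v i \<noteq> 0 \<and> coeff c i \<noteq> 0} \<subseteq> S - S'"
    using c(3) unfolding S_def by auto
  then have "card {i. i < n \<and> coeff v i \<noteq> 0 \<and> coeff c i \<noteq> 0} \<le> card (S - S')"
    using S(2) by (intro card_mono) auto
  also have "card (S - S') = 2 * h + 1"
    using card_Diff_subset[OF S'(3,1)] S(3) S'(2) dA_ge' by simp
  finally have "\<forall>j\<in>S. coeff c j = 0"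
    using overlap_with_dual_support[OF assms(2) c(1)] unfolding S_def by auto
  then show ?thesis
    using that[OF c(1,2) R(1)] R(2) c(3) k by auto
qed

lemma exists_low_weight_codeword:
  assumes "\<delta> - 2 < int n - int m - int dA"
  shows "\<exists>c\<in>C. c \<noteq> 0 \<and> weight n c \<le> 2 * u + 2 * h + 1"
proof -
  obtain v where v: "v \<in> D" "weight n v = dA"
    by (rule dual_minimal_word)
  define S where "S = {i. i < n \<and> coeff v i \<noteq> 0}"
  obtain c R where c: "c \<in> C" "c \<noteq> 0" "\<forall>j\<in>S \<union> R. coeff c j = 0"
    and R: "R \<subseteq> {..<n} - S" "card R = n - (2 * u + 2 * h + 1) - dA"
    using exists_codeword_vanishing_on_dual_support[OF assms v, folded S_def] .
  have S: "S \<subseteq> {..<n}" "card S = dA"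
    using v(2) by (auto simp: S_def weight_def)
  have fin: "finite S" "finite R"
    using S(1) R(1) by (auto intro: finite_subset)
  have "weight n c \<le> card ({..<n} - (S \<union> R))"
    unfolding weight_def using c(3) by (intro card_mono) auto
  also have "\<dots> = n - card (S \<union> R)"
    using S(1) R(1) fin by (subst card_Diff_subset) auto
  also have "card (S \<union> R) = dA + (n - (2 * u + 2 * h + 1) - dA)"
    using card_Un_disjoint[OF fin] R S by auto
  finally show ?thesis
    using c(1,2) by (intro bexI[of _ c]) auto
qed

lemma min_dist_C:
  assumes "\<delta> - 2 < int n - int m - int dA"
  shows "min_dist n C = 2 * u + 2 * h + 1"
proof -
  obtain c where c: "c \<in> C" "c \<noteq> 0" "weight n c \<le> 2 * u + 2 * h + 1"
    using exists_low_weight_codeword[OF assms] by blast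
  obtain c' where c': "c' \<in> C" "c' \<noteq> 0" "weight n c' = min_dist n C"
    using min_dist_attained[OF c(1,2)] by blast
  show ?thesis
    using weight_C_ge[OF c'(1,2)] c'(3) min_dist_le_weight[OF c(1,2), of n] c(3) by linarith
qed

lemma int_min_dist_C:
  assumes "\<delta> - 2 < int n - int m - int dA"
  shows "int (min_dist n C) = int m + \<delta> - 1"
  using min_dist_C[OF assms] m_eq \<delta>_eq by simp

text \<open>Here \<open>k = n - m - 2\<delta> + 3\<close> and \<open>r = dA - \<delta> + 1\<close> satisfy \<open>r < k \<le> 2r\<close>, so \<open>\<lceil>k/r\<rceil> = 2\<close>
  and the Singleton-like bound reads \<open>d \<le> n - k - \<delta> + 2 = m + \<delta> - 1\<close>.\<close>

lemma optimal_LRC_C: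
  assumes "\<delta> - 2 < int n - int m - int dA"
  shows "optimal_LRC q n C (int dA - \<delta> + 1) \<delta>"
proof -
  define r where "r = int dA - \<delta> + 1"
  define k where "k = int (code_dim q C)"
  have k: "k = 2 * int t - 2 * int u - 4 * int h"
    unfolding k_def int_code_dim_C using n_eq m_eq \<delta>_eq by simp
  have dA_upper: "int dA \<le> k + 2 * int h"
    using assms k n_eq m_eq \<delta>_eq by linarith
  have dA_lower: "int t + 1 \<le> int dA + int u"
    using dA_ge t_ge by linarith
  have "0 < r" "r < k"
    unfolding r_def using dA_upper dA_lower t_ge k \<delta>_eq by linarith+
  moreover have "k \<le> 2 * r"
    unfolding r_def using dA_lower k \<delta>_eq by simp
  ultimately have "1 < real_of_int k / real_of_int r" "real_of_int k / real_of_int r \<le> 2"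
    by (simp_all add: field_simps)
  then have "\<lceil>real_of_int k / real_of_int r\<rceil> = 2"
    by (intro ceiling_unique) simp_all
  then show ?thesis
    unfolding optimal_LRC_def Let_def r_def[symmetric] k_def[symmetric]
    using is_LRC_C min_dist_C[OF assms] k n_eq \<delta>_eq by (simp add: r_def)
qed

end

theorem corollary5p3:
  fixes q n m b dA :: nat and A B :: "'a::{field,finite} set" and C :: "'a poly set" and \<delta> :: int and \<alpha> :: 'a
  assumes "prime_power q" and "card (UNIV :: 'a set) = q ^ 2"
    and "odd n" and "n dvd q + 1"
    and "primitive_root_unity n \<alpha>"
    and "m > 0" and "even m"
    and "b > 0" and "gcd b n = 1"
    and "even \<delta>" and "2 \<le> \<delta>" and "2 * \<delta> \<le> int n - int m + 1"
  assumes A_def: "A = {1} \<union> {ipow n \<alpha> (s * ((int n + 2 * int j - 1) div 2) * int b) | s j.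
                   s \<in> {1, -1} \<and> 1 \<le> j \<and> j \<le> m div 2}"
    and B_def: "B = {ipow n \<alpha> (j * int b) | j. - ((\<delta> - 2) div 2) \<le> j \<and> j \<le> (\<delta> - 2) div 2}"
    and dA_def: "dA = min_dist n (dual_code n (cyclic_code n A))"
    and C_def: "C = cyclic_code_q q n (set_mult A B)"
  shows "is_LRC n C (int dA - \<delta> + 1) \<delta> \<and>
         int (code_dim q C) = int n - int m - 2 * \<delta> + 3 \<and>
         (\<delta> - 2 < int n - int m - int dA \<longrightarrow>
            optimal_LRC q n C (int dA - \<delta> + 1) \<delta> \<and> int (min_dist n C) = int m + \<delta> - 1)"
proof -
  interpret LRC_construction q n m b dA A B C \<delta> \<alpha>
    by (rule LRC_construction.intro) (fact assms)+
  show ?thesis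
    using is_LRC_C int_code_dim_C optimal_LRC_C int_min_dist_C by blast
qed

end
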